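(* Let $T$ be a countable tree with at least one vertex of infinite degree, and let $H$ be a countable graph in which every vertex has infinite degree. Then for every $v\in V(H)$, $H$ contains a subgraph isomorphic to $T$ whose vertex set contains $N_H(v)$.
   Context: $N_H(v)$ denotes the set of neighbors of $v$ in $H$. *)

theory Defs
  imports Main "HOL-Library.Countable_Set"
begin

definition graph :: "'a set \<Rightarrow> ('a \<Rightarrow> 'a \<Rightarrow> bool) \<Rightarrow> bool" where
  "graph V E \<longleftrightarrow> (\<forall>x y. E x y \<longrightarrow> x \<in> V \<and> y \<in> V \<and> x \<noteq> y \<and> E y x)"

definition neighbors :: "'a set \<Rightarrow> ('a \<Rightarrow> 'a \<Rightarrow> bool) \<Rightarrow> 'a \<Rightarrow> 'a set" where
  "neighbors V E v = {u \<in> V. E v u}"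

definition infinite_degree :: "'a set \<Rightarrow> ('a \<Rightarrow> 'a \<Rightarrow> bool) \<Rightarrow> 'a \<Rightarrow> bool" where
  "infinite_degree V E v \<longleftrightarrow> infinite (neighbors V E v)"

definition connected_graph :: "'a set \<Rightarrow> ('a \<Rightarrow> 'a \<Rightarrow> bool) \<Rightarrow> bool" where
  "connected_graph V E \<longleftrightarrow> V \<noteq> {} \<and> (\<forall>x\<in>V. \<forall>y\<in>V. E\<^sup>*\<^sup>* x y)"

definition is_cycle :: "('a \<Rightarrow> 'a \<Rightarrow> bool) \<Rightarrow> 'a list \<Rightarrow> bool" where
  "is_cycle E cs \<longleftrightarrow> length cs \<ge> 3 \<and> distinct cs \<and>
     (\<forall>i. Suc i < length cs \<longrightarrow> E (cs ! i) (cs ! Suc i)) \<and> E (last cs) (hd cs)"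

definition tree :: "'a set \<Rightarrow> ('a \<Rightarrow> 'a \<Rightarrow> bool) \<Rightarrow> bool" where
  "tree V E \<longleftrightarrow> graph V E \<and> connected_graph V E \<and> (\<nexists>cs. is_cycle E cs)"

text \<open>H = (VH, EH) contains a subgraph isomorphic to T = (VT, ET) whose vertex set
is f ` VT: f is injective on VT and maps edges to edges.\<close>
definition subgraph_embedding ::
  "'b set \<Rightarrow> ('b \<Rightarrow> 'b \<Rightarrow> bool) \<Rightarrow> 'a set \<Rightarrow> ('a \<Rightarrow> 'a \<Rightarrow> bool) \<Rightarrow> ('b \<Rightarrow> 'a) \<Rightarrow> bool" where
  "subgraph_embedding VT ET VH EH f \<longleftrightarrow> inj_on f VT \<and> f ` VT \<subseteq> VH \<and>
     (\<forall>x\<in>VT. \<forall>y\<in>VT. ET x y \<longrightarrow> EH (f x) (f y))"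

end

theory Submission
  imports Defs "HOL-Library.Transitive_Closure_Table"
begin

text \<open>Build the embedding as the union of an increasing chain of finite partial embeddings
of subtrees of \<open>T\<close> containing a fixed vertex \<open>t\<close> of infinite degree, with \<open>t\<close> mapped to \<open>v\<close>.
A finite subtree extends by any vertex \<open>x\<close> adjacent to it: acyclicity makes the neighbour
\<open>p\<close> of \<open>x\<close> in the subtree unique, so \<open>x\<close> may be sent to any unused neighbour of the image
of \<open>p\<close>, and one exists because \<open>H\<close> has infinite degrees. A neighbour \<open>u\<close> of \<open>v\<close> not yet
covered is picked up by sending an unused neighbour of \<open>t\<close> to \<open>u\<close>. Interleaving the two
kinds of steps along enumerations of \<open>V(T)\<close> and \<open>N_H(v)\<close> exhausts both.\<close>

definition induced_edge :: "'a set \<Rightarrow> ('a \<Rightarrow> 'a \<Rightarrow> bool) \<Rightarrow> 'a \<Rightarrow> 'a \<Rightarrow> bool" where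
  "induced_edge S E a b \<longleftrightarrow> a \<in> S \<and> b \<in> S \<and> E a b"

lemma tree_unique_neighbour_in_connected_set:
  assumes "tree V E" "x \<notin> S" "(induced_edge S E)\<^sup>*\<^sup>* a b" "E x a" "E x b"
  shows "a = b"
proof (rule ccontr)
  assume "a \<noteq> b"
  obtain xs where path: "rtrancl_path (induced_edge S E) a xs b" and "distinct (a # xs)"
    using assms(3) rtrancl_path_distinct by (metis rtranclp_eq_rtrancl_path)
  have "xs \<noteq> []" using path \<open>a \<noteq> b\<close> by (auto elim: rtrancl_path.cases)
  have step: "induced_edge S E ((a # xs) ! j) (xs ! j)" if "j < length xs" for j
    using rtrancl_path_nth[OF path that] .
  have "a \<in> S" using step[of 0] \<open>xs \<noteq> []\<close> by (simp add: induced_edge_def)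
  moreover have "set xs \<subseteq> S"
    using rtrancl_path_Range[OF path] by (auto simp: induced_edge_def Rangep.simps)
  ultimately have "set (a # xs) \<subseteq> S" by simp
  have graph: "graph V E" using assms(1) by (simp add: tree_def)
  have "is_cycle E (x # a # xs)"
    unfolding is_cycle_def
  proof (intro conjI allI impI)
    show "3 \<le> length (x # a # xs)" using \<open>xs \<noteq> []\<close> by (cases xs) auto
    show "distinct (x # a # xs)" using \<open>distinct (a # xs)\<close> \<open>set (a # xs) \<subseteq> S\<close> assms(2) by auto
    show "E (last (x # a # xs)) (hd (x # a # xs))"
      using rtrancl_path_last[OF path \<open>xs \<noteq> []\<close>] \<open>xs \<noteq> []\<close> assms(5) graph
      by (simp add: graph_def)
  next
    fix i assume i: "Suc i < length (x # a # xs)"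
    show "E ((x # a # xs) ! i) ((x # a # xs) ! Suc i)"
    proof (cases i)
      case 0
      then show ?thesis using assms(4) by simp
    next
      case (Suc j)
      then show ?thesis using step[of j] i by (simp add: induced_edge_def)
    qed
  qed
  then show False using assms(1) by (simp add: tree_def)
qed

lemma subgraph_embedding_cong:
  "(\<And>a. a \<in> S \<Longrightarrow> f a = g a) \<Longrightarrow>
    subgraph_embedding S E VH EH f \<longleftrightarrow> subgraph_embedding S E VH EH g"
  by (simp add: subgraph_embedding_def cong: inj_on_cong image_cong)

lemma subgraph_embedding_if_pairwise:
  assumes "\<And>x y. x \<in> V \<Longrightarrow> y \<in> V \<Longrightarrow>
    \<exists>W \<subseteq> V. x \<in> W \<and> y \<in> W \<and> subgraph_embedding W E VH EH f"
  shows "subgraph_embedding V E VH EH f"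
  using assms by (simp add: subgraph_embedding_def inj_on_def subset_eq) metis

definition extends :: "'b set \<Rightarrow> ('b \<Rightarrow> 'a) \<Rightarrow> 'b set \<Rightarrow> ('b \<Rightarrow> 'a) \<Rightarrow> bool" where
  "extends S f S' f' \<longleftrightarrow> S \<subseteq> S' \<and> (\<forall>a\<in>S. f' a = f a)"

lemma extends_refl: "extends S f S f"
  by (simp add: extends_def)

lemma extends_trans: "extends S f S' f' \<Longrightarrow> extends S' f' S'' f'' \<Longrightarrow> extends S f S'' f''"
  by (auto simp: extends_def)

lemma extends_chain:
  assumes "\<And>n. extends (S n) (f n) (S (Suc n)) (f (Suc n))" "m \<le> n"
  shows "extends (S m) (f m) (S n) (f n)"
  using assms(2) by (induction rule: dec_induct) (auto intro: extends_refl extends_trans assms(1))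

lemma extends_chain_Least:
  assumes "\<And>n. extends (S n) (f n) (S (Suc n)) (f (Suc n))" "a \<in> S n"
  shows "f (LEAST n. a \<in> S n) a = f n a"
proof -
  have "(LEAST n. a \<in> S n) \<le> n" "a \<in> S (LEAST n. a \<in> S n)"
    using assms(2) by (auto intro: Least_le LeastI)
  then show ?thesis using extends_chain[of S f, OF assms(1)] by (auto simp: extends_def)
qed

locale tree_into_graph =
  fixes VT :: "'b set" and ET :: "'b \<Rightarrow> 'b \<Rightarrow> bool"
    and VH :: "'a set" and EH :: "'a \<Rightarrow> 'a \<Rightarrow> bool" and t :: 'b and v :: 'a
  assumes tree: "tree VT ET" and countable_VT: "countable VT"
    and t_in_VT: "t \<in> VT" and infinite_degree_t: "infinite_degree VT ET t"
    and graph_H: "graph VH EH" and infinite_degree_H: "\<And>w. w \<in> VH \<Longrightarrow> infinite_degree VH EH w"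
    and countable_VH: "countable VH" and v_in_VH: "v \<in> VH"
begin

lemma graph_T: "graph VT ET"
  using tree by (simp add: tree_def)

definition partial_embedding :: "'b set \<Rightarrow> ('b \<Rightarrow> 'a) \<Rightarrow> bool" where
  "partial_embedding S f \<longleftrightarrow> finite S \<and> t \<in> S \<and> S \<subseteq> VT \<and> f t = v \<and>
     (\<forall>a\<in>S. (induced_edge S ET)\<^sup>*\<^sup>* t a) \<and> subgraph_embedding S ET VH EH f"

lemma partial_embedding_singleton: "partial_embedding {t} (\<lambda>_. v)"
proof -
  have "\<not> ET t t" using graph_T by (auto simp: graph_def)
  then show ?thesis
    using t_in_VT v_in_VH by (simp add: partial_embedding_def subgraph_embedding_def)
qed

lemma partial_embedding_unique_neighbour:
  assumes "partial_embedding S f" "x \<notin> S" "a \<in> S" "b \<in> S" "ET x a" "ET x b"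
  shows "a = b"
proof -
  have "symp (induced_edge S ET)"
    using graph_T by (auto simp: symp_def induced_edge_def graph_def)
  moreover have "(induced_edge S ET)\<^sup>*\<^sup>* t a" "(induced_edge S ET)\<^sup>*\<^sup>* t b"
    using assms(1,3,4) by (auto simp: partial_embedding_def)
  ultimately have "(induced_edge S ET)\<^sup>*\<^sup>* a b"
    by (meson symp_rtranclp sympD rtranclp_trans)
  then show ?thesis
    using tree_unique_neighbour_in_connected_set[OF tree assms(2) _ assms(5,6)] by blast
qed

lemma partial_embedding_add_leaf:
  assumes emb: "partial_embedding S f" and x: "x \<in> VT" "x \<notin> S" and p: "p \<in> S" "ET p x"
    and y: "EH (f p) y" "y \<notin> f ` S"
  shows "partial_embedding (insert x S) (f(x := y))"
proof -
  have "ET x p" using p(2) graph_T by (auto simp: graph_def)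
  then have parent: "b = p" if "b \<in> S" "ET x b" for b
    using partial_embedding_unique_neighbour[OF emb x(2) that(1) p(1) that(2)] by blast
  have edges: "EH ((f(x := y)) a) ((f(x := y)) b)"
    if ab: "a \<in> insert x S" "b \<in> insert x S" and edge: "ET a b" for a b
  proof -
    consider "a = x" "b \<in> S" | "b = x" "a \<in> S" | "a \<in> S" "b \<in> S"
      using ab edge graph_T by (auto simp: graph_def)
    then show ?thesis
    proof cases
      case 1
      then show ?thesis using parent[of b] edge x(2) y(1) graph_H by (auto simp: graph_def)
    next
      case 2
      then show ?thesis using parent[of a] edge x(2) y(1) graph_T by (auto simp: graph_def)
    next
      case 3
      then show ?thesis using emb edge x(2) by (auto simp: partial_embedding_def subgraph_embedding_def)
    qed
  qed
  have widen: "(induced_edge (insert x S) ET)\<^sup>*\<^sup>* t a" if "a \<in> S" for a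
  proof -
    have "(induced_edge S ET)\<^sup>*\<^sup>* t a" using emb that by (simp add: partial_embedding_def)
    then show ?thesis by (rule rtranclp_mono[THEN predicate2D, rotated]) (auto simp: induced_edge_def)
  qed
  have "(induced_edge (insert x S) ET)\<^sup>*\<^sup>* t x"
    using widen[OF p(1)] p by (auto intro: rtranclp.rtrancl_into_rtrancl simp: induced_edge_def)
  then have "\<forall>a\<in>insert x S. (induced_edge (insert x S) ET)\<^sup>*\<^sup>* t a"
    using widen by blast
  moreover have "y \<in> VH" using y(1) graph_H by (auto simp: graph_def)
  moreover have "inj_on (f(x := y)) (insert x S)"
    using emb y(2) x(2) by (auto simp: partial_embedding_def subgraph_embedding_def inj_on_def)
  ultimately show ?thesis
    using emb x edges by (auto simp: partial_embedding_def subgraph_embedding_def)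
qed

lemma partial_embedding_fresh_neighbour:
  assumes "partial_embedding S f" "p \<in> S"
  obtains y where "EH (f p) y" "y \<notin> f ` S"
proof -
  have "f p \<in> VH" using assms by (auto simp: partial_embedding_def subgraph_embedding_def)
  then have "infinite (neighbors VH EH (f p) - f ` S)"
    using infinite_degree_H assms(1) by (auto simp: infinite_degree_def partial_embedding_def)
  then obtain y where "y \<in> neighbors VH EH (f p) - f ` S" using infinite_imp_nonempty by blast
  then show ?thesis using that by (auto simp: neighbors_def)
qed

lemma partial_embedding_extend_to_vertex:
  assumes "partial_embedding S f" "ET\<^sup>*\<^sup>* t x"
  shows "\<exists>S' f'. partial_embedding S' f' \<and> extends S f S' f' \<and> x \<in> S'"
  using assms(2)
proof (induction rule: rtranclp_induct)
  case base
  have "t \<in> S" using assms(1) by (simp add: partial_embedding_def)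
  then show ?case using assms(1) extends_refl by blast
next
  case (step p x)
  then obtain S' f' where S': "partial_embedding S' f'" "extends S f S' f'" "p \<in> S'" by blast
  show ?case
  proof (cases "x \<in> S'")
    case True
    then show ?thesis using S' by blast
  next
    case False
    obtain y where y: "EH (f' p) y" "y \<notin> f' ` S'"
      using partial_embedding_fresh_neighbour[OF S'(1,3)] .
    have "x \<in> VT" using step(2) graph_T by (auto simp: graph_def)
    then have "partial_embedding (insert x S') (f'(x := y))"
      using partial_embedding_add_leaf[OF S'(1) _ False S'(3) step(2) y] by blast
    moreover have "extends S f (insert x S') (f'(x := y))"
      using S'(2) False by (auto simp: extends_def)
    ultimately show ?thesis by blast
  qed
qed

lemma partial_embedding_extend_to_cover:
  assumes emb: "partial_embedding S f" and u: "u \<in> neighbors VH EH v"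
  shows "\<exists>S' f'. partial_embedding S' f' \<and> extends S f S' f' \<and> u \<in> f' ` S'"
proof (cases "u \<in> f ` S")
  case True
  then show ?thesis using emb extends_refl by blast
next
  case False
  have "infinite (neighbors VT ET t - S)"
    using infinite_degree_t emb by (auto simp: infinite_degree_def partial_embedding_def)
  then obtain x where x: "x \<in> neighbors VT ET t" "x \<notin> S" using infinite_imp_nonempty by blast
  have "t \<in> S" "f t = v" using emb by (auto simp: partial_embedding_def)
  then have "partial_embedding (insert x S) (f(x := u))"
    using partial_embedding_add_leaf[OF emb _ x(2)] x(1) u False by (auto simp: neighbors_def)
  moreover have "extends S f (insert x S) (f(x := u))" using x(2) by (auto simp: extends_def)
  ultimately show ?thesis by (intro exI[of _ "insert x S"] exI[of _ "f(x := u)"]) auto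
qed

lemma partial_embedding_extend:
  assumes emb: "partial_embedding S f" and "x \<in> VT" "u \<in> neighbors VH EH v"
  shows "\<exists>S' f'. partial_embedding S' f' \<and> extends S f S' f' \<and> x \<in> S' \<and> u \<in> f' ` S'"
proof -
  have "ET\<^sup>*\<^sup>* t x" using tree \<open>x \<in> VT\<close> t_in_VT by (auto simp: tree_def connected_graph_def)
  then obtain S1 f1 where S1: "partial_embedding S1 f1" "extends S f S1 f1" "x \<in> S1"
    using partial_embedding_extend_to_vertex[OF emb] by blast
  then obtain S2 f2 where S2: "partial_embedding S2 f2" "extends S1 f1 S2 f2" "u \<in> f2 ` S2"
    using partial_embedding_extend_to_cover \<open>u \<in> neighbors VH EH v\<close> by blast
  then have "extends S f S2 f2" "x \<in> S2"
    using S1 by (auto simp: extends_def intro: extends_trans)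
  then show ?thesis using S2 by blast
qed

definition next_stage :: "nat \<Rightarrow> 'b set \<Rightarrow> ('b \<Rightarrow> 'a) \<Rightarrow> 'b set \<Rightarrow> ('b \<Rightarrow> 'a) \<Rightarrow> bool" where
  "next_stage n S f S' f' \<longleftrightarrow> partial_embedding S' f' \<and> extends S f S' f' \<and>
     from_nat_into VT n \<in> S' \<and> from_nat_into (neighbors VH EH v) n \<in> f' ` S'"

lemma next_stage_exists:
  assumes "partial_embedding S f"
  shows "\<exists>S' f'. next_stage n S f S' f'"
proof -
  have "from_nat_into VT n \<in> VT" using t_in_VT by (auto intro: from_nat_into)
  moreover have "neighbors VH EH v \<noteq> {}"
    using infinite_degree_H[OF v_in_VH] by (auto simp: infinite_degree_def)
  then have "from_nat_into (neighbors VH EH v) n \<in> neighbors VH EH v" by (rule from_nat_into)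
  ultimately show ?thesis
    using partial_embedding_extend[OF assms] by (simp add: next_stage_def)
qed

primrec stage :: "nat \<Rightarrow> 'b set \<times> ('b \<Rightarrow> 'a)" where
  "stage 0 = ({t}, \<lambda>_. v)"
| "stage (Suc n) = (SOME p. next_stage n (fst (stage n)) (snd (stage n)) (fst p) (snd p))"

declare stage.simps(2) [simp del]

abbreviation stage_set :: "nat \<Rightarrow> 'b set" where "stage_set n \<equiv> fst (stage n)"
abbreviation stage_map :: "nat \<Rightarrow> 'b \<Rightarrow> 'a" where "stage_map n \<equiv> snd (stage n)"

lemma stage_Suc:
  assumes "partial_embedding (stage_set n) (stage_map n)"
  shows "next_stage n (stage_set n) (stage_map n) (stage_set (Suc n)) (stage_map (Suc n))"
proof -
  obtain S' f' where "next_stage n (stage_set n) (stage_map n) S' f'"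
    using next_stage_exists[OF assms] by blast
  then have "next_stage n (stage_set n) (stage_map n) (fst (S', f')) (snd (S', f'))" by simp
  then show ?thesis unfolding stage.simps(2) by (rule someI)
qed

lemma partial_embedding_stage: "partial_embedding (stage_set n) (stage_map n)"
proof (induction n)
  case 0
  show ?case by (simp add: partial_embedding_singleton)
next
  case (Suc n)
  then show ?case using stage_Suc by (simp add: next_stage_def)
qed

lemma stage_extends: "extends (stage_set n) (stage_map n) (stage_set (Suc n)) (stage_map (Suc n))"
  using stage_Suc[OF partial_embedding_stage] by (simp add: next_stage_def)

definition limit_map :: "'b \<Rightarrow> 'a" where
  "limit_map x = stage_map (LEAST n. x \<in> stage_set n) x"

lemma limit_map_eq: "x \<in> stage_set n \<Longrightarrow> limit_map x = stage_map n x"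
  unfolding limit_map_def by (rule extends_chain_Least[of stage_set stage_map, OF stage_extends])

lemma vertex_in_stage:
  assumes "x \<in> VT"
  obtains n where "x \<in> stage_set n"
proof -
  obtain n where "from_nat_into VT n = x" using from_nat_into_surj[OF countable_VT assms] by blast
  then show ?thesis using stage_Suc[OF partial_embedding_stage, of n] that
    by (auto simp: next_stage_def)
qed

lemma subgraph_embedding_limit_map: "subgraph_embedding VT ET VH EH limit_map"
proof (rule subgraph_embedding_if_pairwise)
  fix x y assume "x \<in> VT" "y \<in> VT"
  then obtain m n where "x \<in> stage_set m" "y \<in> stage_set n"
    using vertex_in_stage by meson
  define k where "k = max m n"
  have "x \<in> stage_set k" "y \<in> stage_set k"
    using \<open>x \<in> stage_set m\<close> \<open>y \<in> stage_set n\<close>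
      extends_chain[of stage_set stage_map, OF stage_extends, of m k]
      extends_chain[of stage_set stage_map, OF stage_extends, of n k]
    by (auto simp: extends_def k_def)
  moreover have "stage_set k \<subseteq> VT"
    and "subgraph_embedding (stage_set k) ET VH EH (stage_map k)"
    using partial_embedding_stage[of k] by (simp_all add: partial_embedding_def)
  moreover have "subgraph_embedding (stage_set k) ET VH EH limit_map \<longleftrightarrow>
      subgraph_embedding (stage_set k) ET VH EH (stage_map k)"
    by (rule subgraph_embedding_cong) (rule limit_map_eq)
  ultimately show "\<exists>W\<subseteq>VT. x \<in> W \<and> y \<in> W \<and> subgraph_embedding W ET VH EH limit_map"
    by (intro exI[of _ "stage_set k"]) simp
qed

lemma neighbors_subset_limit_map_image: "neighbors VH EH v \<subseteq> limit_map ` VT"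
proof
  fix u assume u: "u \<in> neighbors VH EH v"
  have "neighbors VH EH v \<subseteq> VH" by (auto simp: neighbors_def)
  then obtain n where "from_nat_into (neighbors VH EH v) n = u"
    using from_nat_into_surj[OF countable_subset[OF _ countable_VH] u] by blast
  then have "u \<in> stage_map (Suc n) ` stage_set (Suc n)"
    using stage_Suc[OF partial_embedding_stage, of n] by (simp add: next_stage_def)
  then obtain x where x: "x \<in> stage_set (Suc n)" "u = stage_map (Suc n) x" by blast
  then have "u = limit_map x" by (simp only: limit_map_eq)
  moreover have "x \<in> VT"
    using x(1) partial_embedding_stage[of "Suc n"] by (auto simp: partial_embedding_def)
  ultimately show "u \<in> limit_map ` VT" by blast
qed

end

theorem mainTheorem13:
  fixes VT :: "'b set" and ET :: "'b \<Rightarrow> 'b \<Rightarrow> bool"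
    and VH :: "'a set" and EH :: "'a \<Rightarrow> 'a \<Rightarrow> bool"
  assumes "tree VT ET" and "countable VT"
    and "\<exists>t\<in>VT. infinite_degree VT ET t"
    and "graph VH EH" and "countable VH"
    and "\<forall>w\<in>VH. infinite_degree VH EH w"
    and "v \<in> VH"
  shows "\<exists>f. subgraph_embedding VT ET VH EH f \<and> neighbors VH EH v \<subseteq> f ` VT"
proof -
  obtain t where "t \<in> VT" "infinite_degree VT ET t" using assms(3) by blast
  then interpret tree_into_graph VT ET VH EH t v
    using assms by unfold_locales simp_all
  show ?thesis using subgraph_embedding_limit_map neighbors_subset_limit_map_image by blast
qed

end
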